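(* Let $1\le d\le r$ and $0\le k\le d-1$ be integers. Then, componentwise, $g^{1,d}_k\le g^{d,d}_k\le g^{d+1,d}_k\le\cdots\le g^{r,d}_k\le g^{r+1,d}_k$.
   Context: For integers $r\ge0$, $d\ge1$ and $i\in\mathbb Z$, $C(r,d,i)$ denotes the number of integer vectors $(u_1,\dots,u_d)$ with $u_1+\cdots+u_d=i$ and $0\le u_l\le r$ for all $l$. For integers $d\ge1$, $r\ge1$, $k\ge0$: if $0\le k\le r-1$, let $\hat g^{r,d}_k=(g_0,g_1,\dots,g_{\lfloor d/2\rfloor+1})\in\mathbb Z^{\lfloor d/2\rfloor+2}$ with $g_0=C(r-1,d,-k)=\delta_{0,k}$ and $g_i=C(r-1,d,ir-k)-C(r-1,d,(i-1)r-k)$ for $1\le i\le\lfloor d/2\rfloor+1$; if $k\ge r$, $\hat g^{r,d}_k$ is the zero vector. The vector $g^{r,d}_k\in\mathbb Z^{\lfloor d/2\rfloor+1}$ is obtained from $\hat g^{r,d}_k$ by deleting its last entry. (In particular $g^{1,d}_k$ is defined for $r=1$.) *)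

theory Defs
  imports Main "HOL-Library.FuncSet"
begin

definition Ccount :: "nat \<Rightarrow> nat \<Rightarrow> int \<Rightarrow> int" where
  "Ccount r d i = int (card {u \<in> {0..<d} \<rightarrow>\<^sub>E {0..int r}. (\<Sum>l\<in>{0..<d}. u l) = i})"

text \<open>Entries of the vector hat g^{r,d}_k, indexed by i = 0 .. floor(d/2)+1.\<close>
definition ghat :: "nat \<Rightarrow> nat \<Rightarrow> nat \<Rightarrow> nat \<Rightarrow> int" where
  "ghat r d k i =
     (if k \<ge> r then 0
      else if i = 0 then Ccount (r - 1) d (- int k)
      else Ccount (r - 1) d (int i * int r - int k)
           - Ccount (r - 1) d ((int i - 1) * int r - int k))"

text \<open>g^{r,d}_k is hat g with the last entry deleted: its entries are
  ghat r d k i for 0 <= i <= floor(d/2).\<close>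
definition gvec :: "nat \<Rightarrow> nat \<Rightarrow> nat \<Rightarrow> nat \<Rightarrow> int" where
  "gvec r d k i = ghat r d k i"

definition vec_le :: "nat \<Rightarrow> (nat \<Rightarrow> int) \<Rightarrow> (nat \<Rightarrow> int) \<Rightarrow> bool" where
  "vec_le d v w \<longleftrightarrow> (\<forall>i \<le> d div 2. v i \<le> w i)"

end

theory Submission imports Defs begin

(* C(m,D,n) is the n-th coefficient of (1 + x + ... + x^m)^D.  This
   coefficient sequence splits into "symmetric chains": for every level t with
   2t <= Dm there are  chains m D t  intervals [t, Dm - t], and C(m,D,n) counts the
   intervals containing n.  The chain counts satisfy a Clebsch-Gordan type
   recursion in D, which is their definition below; multiplying one chain by the
   window 0..m splits it into chains again (lemma seg_window_split).
   Consequences: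
   (1) for n in the lower half, C(m,D,n) - C(m,D,n-1) = chains m D n >= 0;
   (2) chains m D t <= chains (m+1) D (t+q) whenever 2q <= D, by an
       injection-style comparison through the recursion.
   Since g_i (i >= 1) is a first difference of C(r-1,d+1,.) at n = ir - k, which
   lies in the lower half when d <= r, (1) gives 0 <= g^{r,d}_k and expresses
   g^{r,d}_k through chain counts, and (2) with q = i gives the monotonicity in r.
   The comparison with g^{1,d}_k is trivial since its entries are <= 0 except the
   first one. *)

text \<open>Splitting off the last coordinate: C(m, D+1, n) is a window sum of C(m, D, .).\<close>
lemma Ccount_Suc:
  "Ccount m (Suc D) n = (\<Sum>y\<in>{0..int m}. Ccount m D (n - y))"
proof -
  let ?T = "\<lambda>_::nat. {0..int m}"
  let ?F = "\<lambda>(y::int, g::nat\<Rightarrow>int). g(D := y)"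
  let ?B = "\<lambda>y. {g \<in> {0..<D} \<rightarrow>\<^sub>E {0..int m}. (\<Sum>l\<in>{0..<D}. g l) = n - y}"
  have range_Suc: "{0..<Suc D} = insert D {0..<D}" by auto
  have sum_upd: "(\<Sum>l\<in>{0..<Suc D}. (g(D:=y)) l) = y + (\<Sum>l\<in>{0..<D}. g l)"
    for g :: "nat \<Rightarrow> int" and y
  proof -
    have "(\<Sum>l\<in>{0..<D}. (g(D:=y)) l) = (\<Sum>l\<in>{0..<D}. g l)"
      by (rule sum.cong) auto
    then show ?thesis by (simp add: range_Suc)
  qed
  have split: "{u \<in> {0..<Suc D} \<rightarrow>\<^sub>E {0..int m}. (\<Sum>l\<in>{0..<Suc D}. u l) = n}
        = ?F ` (SIGMA y:{0..int m}. ?B y)"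
  proof (rule set_eqI, rule iffI)
    fix u assume u: "u \<in> {u \<in> {0..<Suc D} \<rightarrow>\<^sub>E {0..int m}. (\<Sum>l\<in>{0..<Suc D}. u l) = n}"
    then have "u \<in> ?F ` ({0..int m} \<times> ({0..<D} \<rightarrow>\<^sub>E {0..int m}))"
      using PiE_insert_eq[of D "{0..<D}" ?T] by (simp add: range_Suc)
    then obtain y g where yg: "y \<in> {0..int m}" "g \<in> {0..<D} \<rightarrow>\<^sub>E {0..int m}" "u = g(D := y)"
      by auto
    have "(\<Sum>l\<in>{0..<D}. g l) = n - y" using u yg(3) sum_upd[of g y] by simp
    then have "(y, g) \<in> (SIGMA y:{0..int m}. ?B y)" using yg by simp
    then show "u \<in> ?F ` (SIGMA y:{0..int m}. ?B y)" using yg(3) by (intro image_eqI) auto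
  next
    fix u assume "u \<in> ?F ` (SIGMA y:{0..int m}. ?B y)"
    then obtain y g where yg: "y \<in> {0..int m}" "g \<in> {0..<D} \<rightarrow>\<^sub>E {0..int m}"
       "(\<Sum>l\<in>{0..<D}. g l) = n - y" "u = g(D := y)" by auto
    have "u \<in> {0..<Suc D} \<rightarrow>\<^sub>E {0..int m}"
      using PiE_fun_upd[OF yg(1) yg(2)] yg(4) by (simp add: range_Suc)
    moreover have "(\<Sum>l\<in>{0..<Suc D}. u l) = n" using sum_upd[of g y] yg by simp
    ultimately show "u \<in> {u \<in> {0..<Suc D} \<rightarrow>\<^sub>E {0..int m}. (\<Sum>l\<in>{0..<Suc D}. u l) = n}"
      by simp
  qed
  have inj: "inj_on ?F (SIGMA y:{0..int m}. ?B y)"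
    by (rule inj_on_subset[OF inj_combinator[of D "{0..<D}" ?T]]) auto
  have fin: "finite (?B y)" for y
    by (rule finite_subset[of _ "{0..<D} \<rightarrow>\<^sub>E {0..int m}"]) (auto intro: finite_PiE)
  have "card {u \<in> {0..<Suc D} \<rightarrow>\<^sub>E {0..int m}. (\<Sum>l\<in>{0..<Suc D}. u l) = n}
      = (\<Sum>y\<in>{0..int m}. card (?B y))"
    unfolding split by (simp add: card_image[OF inj] fin)
  then show ?thesis unfolding Ccount_def by simp
qed

lemma Ccount_0: "Ccount m 0 n = (if n = 0 then 1 else 0)"
  unfolding Ccount_def by auto

text \<open>At non-positive arguments only the zero vector contributes.\<close>
lemma Ccount_nonpos: "n \<le> 0 \<Longrightarrow> Ccount m D n = (if n = 0 then 1 else 0)"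
proof (induction D arbitrary: n)
  case 0
  then show ?case by (simp add: Ccount_0)
next
  case (Suc D)
  have "Ccount m (Suc D) n = (\<Sum>y\<in>{0..int m}. if y = n then 1 else 0)"
    unfolding Ccount_Suc using Suc by (intro sum.cong) auto
  also have "\<dots> = (if n = 0 then 1 else 0)"
    using Suc.prems by (simp add: sum.delta)
  finally show ?case .
qed

lemma Ccount_bound_0: "Ccount 0 D n = (if n = 0 then 1 else 0)"
  by (induction D arbitrary: n) (simp_all add: Ccount_0 Ccount_Suc)

lemma window_sum_diff:
  fixes h :: "int \<Rightarrow> int"
  shows "(\<Sum>y\<in>{0..int m}. h (n - y)) - (\<Sum>y\<in>{0..int m}. h (n - 1 - y))
         = h n - h (n - 1 - int m)"
proof (induction m)
  case 0
  then show ?case by simp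
next
  case (Suc m)
  have "{0..int (Suc m)} = insert (int m + 1) {0..int m}" by auto
  then show ?case using Suc by (simp add: algebra_simps)
qed

lemma Ccount_Suc_diff:
  "Ccount m (Suc D) n - Ccount m (Suc D) (n - 1) = Ccount m D n - Ccount m D (n - int m - 1)"
  unfolding Ccount_Suc using window_sum_diff[where h="Ccount m D" and m=m and n=n]
  by (simp add: algebra_simps)

section \<open>Symmetric chain decomposition\<close>

text \<open>Indicator of the segment {0, ..., L-1}; a chain from t to K - t is
  seg (K - 2t + 1) (n - t).\<close>
definition seg :: "int \<Rightarrow> int \<Rightarrow> int" where
  "seg L p = of_bool (0 \<le> p \<and> p \<le> L - 1)"

text \<open>Number of chains starting at level t in the decomposition for (1+...+x^m)^D:
  a chain starting at t' in dimension D, multiplied by the window 0..m, yields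
  chains starting at t' + u for all u <= m that fit below the midpoint.\<close>
primrec chains :: "nat \<Rightarrow> nat \<Rightarrow> int \<Rightarrow> int" where
  "chains m 0 t = (if t = 0 then 1 else 0)"
| "chains m (Suc D) t =
     (\<Sum>u\<in>{0..int m}. if u \<le> int D * int m - 2*(t-u) then chains m D (t-u) else 0)"

lemma chains_nonneg: "0 \<le> chains m D t"
  by (induction D arbitrary: t) (simp_all add: sum_nonneg)

lemma chains_support: "chains m D t \<noteq> 0 \<Longrightarrow> 0 \<le> t \<and> 2*t \<le> int D * int m"
proof (induction D arbitrary: t)
  case 0
  then show ?case by (simp split: if_splits)
next
  case (Suc D)
  obtain u where u: "u \<in> {0..int m}"
    "(if u \<le> int D * int m - 2*(t-u) then chains m D (t-u) else 0) \<noteq> 0"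
    using Suc.prems by (auto elim: sum.not_neutral_contains_not_neutral)
  then have fits: "u \<le> int D * int m - 2*(t-u)" and "chains m D (t-u) \<noteq> 0"
    by (auto split: if_splits)
  from Suc.IH[OF this(2)] u(1) fits have "0 \<le> t" "2*t \<le> int D * int m + u" by auto
  moreover have "int D * int m + u \<le> int (Suc D) * int m" using u(1) by (simp add: algebra_simps)
  ultimately show ?case by linarith
qed

text \<open>Product of a segment of length L with the window 0..m: it splits into the
  segments starting at y <= min(m, L-1) of length L + m - 2y.  Both sides count the
  integers in one interval.\<close>
lemma seg_window_split:
  "(\<Sum>y\<in>{0..int m}. seg L (p - y)) =
   (\<Sum>y\<in>{0..int m}. if y \<le> L - 1 then seg (L + int m - 2*y) (p - y) else 0)"
proof -
  have fin: "finite {0..int m}" by simp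
  have "(\<Sum>y\<in>{0..int m}. seg L (p - y))
        = int (card ({0..int m} \<inter> {y. 0 \<le> p - y \<and> p - y \<le> L - 1}))"
    using sum_of_bool_eq[OF fin, where P="\<lambda>y. 0 \<le> p - y \<and> p - y \<le> L - 1"]
    by (simp add: seg_def)
  also have "{0..int m} \<inter> {y. 0 \<le> p - y \<and> p - y \<le> L - 1} = {max 0 (p - L + 1)..min (int m) p}"
    by auto
  finally have lhs: "(\<Sum>y\<in>{0..int m}. seg L (p - y))
      = int (nat (min (int m) p - max 0 (p - L + 1) + 1))"
    by simp
  have "(\<Sum>y\<in>{0..int m}. if y \<le> L - 1 then seg (L + int m - 2*y) (p - y) else 0)
      = (\<Sum>y\<in>{0..int m}. of_bool (y \<le> L - 1 \<and> 0 \<le> p - y \<and> p - y \<le> L + int m - 2*y - 1))"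
    by (rule sum.cong) (auto simp: seg_def)
  also have "\<dots> = int (card ({0..int m} \<inter>
                    {y. y \<le> L - 1 \<and> 0 \<le> p - y \<and> p - y \<le> L + int m - 2*y - 1}))"
    by (rule sum_of_bool_eq[OF fin fin])
  also have "{0..int m} \<inter> {y. y \<le> L - 1 \<and> 0 \<le> p - y \<and> p - y \<le> L + int m - 2*y - 1}
     = {0..min (min (int m) (L - 1)) (min p (L + int m - 1 - p))}"
    by auto
  finally have rhs: "(\<Sum>y\<in>{0..int m}. if y \<le> L - 1 then seg (L + int m - 2*y) (p - y) else 0)
      = int (nat (min (min (int m) (L - 1)) (min p (L + int m - 1 - p)) + 1))"
    by simp
  show ?thesis unfolding lhs rhs by (simp add: min_def max_def)
qed

lemma sum_shift_into:
  fixes h :: "int \<Rightarrow> int"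
  assumes "0 \<le> y" "y \<le> m" and vanish: "\<And>t. h t \<noteq> 0 \<Longrightarrow> t - y \<in> {0..K}"
  shows "(\<Sum>t\<in>{0..K}. h (t + y)) = (\<Sum>t\<in>{0..K + m}. h t)"
proof -
  have "(\<Sum>t\<in>{0..K}. h (t + y)) = (\<Sum>t\<in>(\<lambda>t. t + y) ` {0..K}. h t)"
    by (rule sym, rule sum.reindex_cong[where l="\<lambda>t. t + y"]) (auto simp: inj_on_def)
  also have "\<dots> = (\<Sum>t\<in>{0..K + m}. h t)"
  proof (rule sum.mono_neutral_left)
    show "\<forall>t\<in>{0..K + m} - (\<lambda>t. t + y) ` {0..K}. h t = 0"
      using vanish by (metis DiffE diff_add_cancel image_eqI)
  qed (use assms in auto)
  finally show ?thesis .
qed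

lemma Ccount_chains:
  "Ccount m D n = (\<Sum>t\<in>{0..int D * int m}. chains m D t * seg (int D * int m - 2*t + 1) (n - t))"
proof (induction D arbitrary: n)
  case 0
  then show ?case by (simp add: Ccount_0 seg_def)
next
  case (Suc D)
  define K where "K = int D * int m"
  have KS: "int (Suc D) * int m = K + int m" by (simp add: K_def algebra_simps)
  \<comment> \<open>contribution of the chain starting at t' - y, after multiplying by the window\<close>
  define G where "G y t' = (if y \<le> K - 2*(t'-y)
      then chains m D (t'-y) * seg (K + int m - 2*t' + 1) (n - t') else 0)" for y t'
  have "Ccount m (Suc D) n
      = (\<Sum>t\<in>{0..K}. chains m D t * (\<Sum>y\<in>{0..int m}. seg (K - 2*t + 1) ((n - t) - y)))"
    unfolding Ccount_Suc Suc.IH K_def[symmetric]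
    by (subst sum.swap) (simp add: sum_distrib_left algebra_simps)
  also have "\<dots> = (\<Sum>t\<in>{0..K}. \<Sum>y\<in>{0..int m}. G y (t + y))"
    unfolding seg_window_split sum_distrib_left G_def
    by (intro sum.cong refl) (simp add: algebra_simps)
  also have "\<dots> = (\<Sum>y\<in>{0..int m}. \<Sum>t\<in>{0..K + int m}. G y t)"
  proof (subst sum.swap, rule sum.cong[OF refl])
    fix y assume y: "y \<in> {0..int m}"
    show "(\<Sum>t\<in>{0..K}. G y (t + y)) = (\<Sum>t\<in>{0..K + int m}. G y t)"
    proof (rule sum_shift_into[where h="G y"])
      fix t assume "G y t \<noteq> 0"
      then have "chains m D (t - y) \<noteq> 0" by (auto simp: G_def split: if_splits)
      then show "t - y \<in> {0..K}" using chains_support[of m D "t - y"] by (auto simp: K_def)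
    qed (use y in auto)
  qed
  also have "\<dots> = (\<Sum>t\<in>{0..K + int m}. chains m (Suc D) t * seg (K + int m - 2*t + 1) (n - t))"
    unfolding G_def K_def chains.simps sum_distrib_right by (subst sum.swap, intro sum.cong refl) simp
  finally show ?case unfolding KS .
qed

lemma Ccount_diff_chains:
  assumes "2*n \<le> int D * int m + 1"
  shows "Ccount m D n - Ccount m D (n - 1) = (if 2*n \<le> int D * int m then chains m D n else 0)"
proof -
  define K where "K = int D * int m"
  have "Ccount m D n - Ccount m D (n - 1)
     = (\<Sum>t\<in>{0..K}. chains m D t * seg (K - 2*t + 1) (n - t)
                     - chains m D t * seg (K - 2*t + 1) (n - 1 - t))"
    unfolding Ccount_chains[of m D n] Ccount_chains[of m D "n-1"] K_def by (simp add: sum_subtractf)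
  also have "\<dots> = (\<Sum>t\<in>{0..K}. if t = n then (if 2*n \<le> K then chains m D t else 0) else 0)"
  proof (rule sum.cong[OF refl])
    fix t
    show "chains m D t * seg (K - 2*t + 1) (n - t) - chains m D t * seg (K - 2*t + 1) (n - 1 - t)
        = (if t = n then (if 2*n \<le> K then chains m D t else 0) else 0)"
    proof (cases "chains m D t = 0")
      case False
      then have "0 \<le> t" "2*t \<le> K" using chains_support by (auto simp: K_def)
      then show ?thesis using assms by (auto simp: seg_def K_def)
    qed auto
  qed
  also have "\<dots> = (if 2*n \<le> K then chains m D n else 0)"
  proof -
    have "n \<notin> {0..K} \<Longrightarrow> 2*n \<le> K \<Longrightarrow> chains m D n = 0"
      using chains_support[of m D n] by (auto simp: K_def)
    then show ?thesis by (auto simp: sum.delta)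
  qed
  finally show ?thesis by (simp add: K_def)
qed

text \<open>Each chain at level t - u
  is matched with one at level t + q - u - e, where e in {0,1} absorbs the parity.\<close>
lemma chains_shift_mono: "2*q \<le> D \<Longrightarrow> chains m D t \<le> chains (Suc m) D (t + int q)"
proof (induction D arbitrary: t q)
  case 0
  then show ?case by simp
next
  case (Suc D)
  define e :: nat where "e = (if 2*q \<le> D then 0 else 1)"
  define q' where "q' = q - e"
  have q': "2*q' \<le> D" "q = q' + e" "e + 2*q' \<le> D" using Suc.prems by (auto simp: e_def q'_def)
  let ?A = "\<lambda>u. if u \<le> int D * int m - 2*(t-u) then chains m D (t-u) else 0"
  let ?B = "\<lambda>u. if u \<le> int D * int (Suc m) - 2*(t + int q - u)
                then chains (Suc m) D (t + int q - u) else 0"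
  have B_nonneg: "0 \<le> ?B u" for u by (simp add: chains_nonneg)
  have A_le_B: "?A u \<le> ?B (u + int e)" for u
  proof (cases "u \<le> int D * int m - 2*(t-u)")
    case True
    have fits: "u + int e \<le> int D * int (Suc m) - 2*(t + int q - (u + int e))"
      using True q' by (simp add: algebra_simps)
    have "t + int q - (u + int e) = (t - u) + int q'" using q' by simp
    then have "chains m D (t-u) \<le> chains (Suc m) D (t + int q - (u + int e))"
      by (simp only: Suc.IH[OF q'(1)])
    then show ?thesis using True fits by simp
  qed (use B_nonneg[of "u + int e"] in simp)
  have "chains m (Suc D) t \<le> (\<Sum>u\<in>{0..int m}. ?B (u + int e))"
    by (simp only: chains.simps) (rule sum_mono[OF A_le_B])
  also have "\<dots> = (\<Sum>u\<in>(\<lambda>u. u + int e) ` {0..int m}. ?B u)"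
    by (rule sym, rule sum.reindex_cong[where l="\<lambda>u. u + int e"]) (auto simp: inj_on_def)
  also have "\<dots> \<le> (\<Sum>u\<in>{0..int (Suc m)}. ?B u)"
    by (rule sum_mono2) (auto simp: e_def chains_nonneg)
  finally show ?case by simp
qed

lemma ghat_zero: "ghat r d k 0 = (if k \<ge> r then 0 else if k = 0 then 1 else 0)"
  by (simp add: ghat_def Ccount_nonpos)

lemma ghat_as_diff:
  assumes "k < r" "1 \<le> i"
  shows "ghat r d k i = Ccount (r-1) (Suc d) (int i * int r - int k)
                      - Ccount (r-1) (Suc d) (int i * int r - int k - 1)"
proof -
  have "int (r - 1) = int r - 1" using assms by simp
  then have shift: "int i * int r - int k - int (r - 1) - 1 = (int i - 1) * int r - int k"
    by (simp add: algebra_simps)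
  show ?thesis
    unfolding Ccount_Suc_diff shift using assms by (simp add: ghat_def)
qed

lemma ghat_chains:
  assumes "d \<le> r" "k < r" "1 \<le> i" "2*i \<le> d"
  defines "n \<equiv> int i * int r - int k"
  shows "ghat r d k i = (if 2*n \<le> int (Suc d) * int (r-1) then chains (r-1) (Suc d) n else 0)"
proof -
  have "2*i*r \<le> d*r" by (rule mult_right_mono[OF assms(4)]) simp
  then have "int (2*i*r) \<le> int (d*r)" by (simp only: of_nat_le_iff)
  then have "2 * (int i * int r) \<le> int d * int r" by simp
  moreover have "0 \<le> int k" by simp
  ultimately have "2*n \<le> int d * int r" unfolding n_def by (simp add: right_diff_distrib)
  also have "\<dots> \<le> int (Suc d) * int (r-1) + 1" using assms(1,2) by (simp add: of_nat_diff algebra_simps)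
  finally show ?thesis
    using ghat_as_diff[OF assms(2,3)] Ccount_diff_chains by (simp add: n_def)
qed

lemma ghat_nonneg:
  assumes "d \<le> r" "k < r" "1 \<le> i" "2*i \<le> d"
  shows "0 \<le> ghat r d k i"
  using ghat_chains[OF assms] chains_nonneg by (simp del: chains.simps)

lemma ghat_mono:
  assumes "d \<le> s" "k < s" "1 \<le> i" "2*i \<le> d"
  shows "ghat s d k i \<le> ghat (Suc s) d k i"
proof -
  define n where "n = int i * int s - int k"
  have "ghat s d k i \<le> chains (s-1) (Suc d) n"
    using ghat_chains[OF assms] chains_nonneg by (simp add: n_def del: chains.simps)
  also have "\<dots> \<le> chains s (Suc d) (n + int i)"
    using chains_shift_mono[of i "Suc d" "s-1" n] assms by simp
  also have "\<dots> = ghat (Suc s) d k i"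
  proof -
    have "2*(n + int i) \<le> int (Suc d) * int s"
    proof -
      have "2*i*(Suc s) \<le> d*(Suc s)" by (rule mult_right_mono[OF assms(4)]) simp
      then have "2*(n + int i) \<le> int d * (int s + 1)"
        unfolding n_def by (simp add: algebra_simps flip: of_nat_mult)
      then show ?thesis using assms(1) by (simp add: algebra_simps)
    qed
    moreover have "int i * int (Suc s) - int k = n + int i" by (simp add: n_def algebra_simps)
    ultimately show ?thesis using ghat_chains[of d "Suc s" k i] assms by simp
  qed
  finally show ?thesis .
qed

lemma ghat_one_nonpos: "1 \<le> i \<Longrightarrow> ghat 1 d k i \<le> 0"
  by (cases "k = 0") (simp_all add: ghat_def Ccount_bound_0)

theorem mainTheorem9:
  fixes d r k :: nat
  assumes "1 \<le> d" and "d \<le> r" and "k \<le> d - 1"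
  shows "vec_le d (gvec 1 d k) (gvec d d k) \<and>
         (\<forall>s. d \<le> s \<and> s \<le> r \<longrightarrow> vec_le d (gvec s d k) (gvec (s + 1) d k))"
proof
  have kd: "k < d" using assms by simp
  show "vec_le d (gvec 1 d k) (gvec d d k)"
    unfolding vec_le_def gvec_def
  proof (intro allI impI)
    fix i assume "i \<le> d div 2"
    then have "2*i \<le> d" by simp
    then show "ghat 1 d k i \<le> ghat d d k i"
      using kd ghat_one_nonpos[of i d k] ghat_nonneg[of d d k i]
      by (cases "i = 0") (auto simp: ghat_zero)
  qed
  show "\<forall>s. d \<le> s \<and> s \<le> r \<longrightarrow> vec_le d (gvec s d k) (gvec (s + 1) d k)"
    unfolding vec_le_def gvec_def
  proof (intro allI impI)
    fix s i assume "d \<le> s \<and> s \<le> r" "i \<le> d div 2"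
    moreover have "2*i \<le> d" using \<open>i \<le> d div 2\<close> by simp
    ultimately show "ghat s d k i \<le> ghat (s + 1) d k i"
      using kd ghat_mono[of d s k i] by (cases "i = 0") (auto simp: ghat_zero)
  qed
qed

end
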